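(* Let $0<p<\infty$ and $\alpha>-1$. Suppose $w\in A^p_\beta$ for some $\beta$ with $-1<\beta<\alpha$, and suppose $\varphi$ is an entire function which is of order less than one, or of order one and type zero. Then the weighted superposition operator $S_{\varphi,w}$ is a bounded operator from the Bloch space $\mathcal B$ into $A^p_\alpha$, i.e. it maps $\mathcal B$ into $A^p_\alpha$ and for every $K>0$ there is a constant $C_K$ such that $\int_{\mathbb D}(1-|z|^2)^\alpha|w(z)|^p|\varphi(f(z))|^p\,dA(z)\le C_K$ for all $f\in\mathcal B$ with $\|f\|_{\mathcal B}\le K$.
   Context: $\mathbb D$ is the unit disc, $\mathcal H(\mathbb D)$ the analytic functions on it. For $\varphi$ entire and $w\in\mathcal H(\mathbb D)$, $S_{\varphi,w}(f)(z)=w(z)\varphi(f(z))$. For $0<p<\infty$, $\gamma>-1$, $A^p_\gamma$ is the set of $f\in\mathcal H(\mathbb D)$ with $\int_{\mathbb D}(1-|z|^2)^\gamma|f(z)|^p\,dA(z)<\infty$, $dA$ normalized area measure. The Bloch space $\mathcal B$ consists of $f\in\mathcal H(\mathbb D)$ with $\|f\|_{\mathcal B}=|f(0)|+\sup_{z\in\mathbb D}(1-|z|^2)|f'(z)|<\infty$. Since the operator is nonlinear, "bounded" means it maps bounded sets to bounded sets. *)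

theory Defs
  imports "HOL-Analysis.Analysis" "HOL-Library.Liminf_Limsup"
begin

abbreviation unit_disc :: "complex set" where
  "unit_disc \<equiv> ball 0 1"

text \<open>Integral of the nonnegative function g against normalized area measure dA = dx dy / pi
  over the unit disc.\<close>
definition dA_integral :: "(complex \<Rightarrow> real) \<Rightarrow> ennreal" where
  "dA_integral g = (\<integral>\<^sup>+ z. ennreal (indicator unit_disc z * g z / pi) \<partial>lborel)"

definition bergman_integral :: "real \<Rightarrow> real \<Rightarrow> (complex \<Rightarrow> complex) \<Rightarrow> ennreal" where
  "bergman_integral p \<gamma> f = dA_integral (\<lambda>z. (1 - (cmod z)\<^sup>2) powr \<gamma> * cmod (f z) powr p)"

definition weighted_bergman :: "real \<Rightarrow> real \<Rightarrow> (complex \<Rightarrow> complex) set" where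
  "weighted_bergman p \<gamma> = {f. f holomorphic_on unit_disc \<and> bergman_integral p \<gamma> f < \<infinity>}"

definition bloch_space :: "(complex \<Rightarrow> complex) set" where
  "bloch_space = {f. f holomorphic_on unit_disc \<and>
      bdd_above ((\<lambda>z. (1 - (cmod z)\<^sup>2) * cmod (deriv f z)) ` unit_disc)}"

definition bloch_norm :: "(complex \<Rightarrow> complex) \<Rightarrow> real" where
  "bloch_norm f = cmod (f 0) + (SUP z\<in>unit_disc. (1 - (cmod z)\<^sup>2) * cmod (deriv f z))"

definition superpos :: "(complex \<Rightarrow> complex) \<Rightarrow> (complex \<Rightarrow> complex) \<Rightarrow> (complex \<Rightarrow> complex)
    \<Rightarrow> (complex \<Rightarrow> complex)" where
  "superpos \<phi> w f = (\<lambda>z. w z * \<phi> (f z))"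

definition max_modulus :: "(complex \<Rightarrow> complex) \<Rightarrow> real \<Rightarrow> real" where
  "max_modulus \<phi> r = Sup ((\<lambda>z. cmod (\<phi> z)) ` sphere 0 r)"

text \<open>Order of an entire function: limsup_{r\<rightarrow>\<infinity>} log log M(r) / log r.
  (M(r) is replaced by max(M(r), e), which changes nothing for nonconstant functions
  and gives order 0 for constants, the usual convention.)\<close>
definition entire_order :: "(complex \<Rightarrow> complex) \<Rightarrow> ereal" where
  "entire_order \<phi> = Limsup at_top
     (\<lambda>r::real. ereal (ln (ln (max (max_modulus \<phi> r) (exp 1))) / ln r))"

definition entire_type :: "(complex \<Rightarrow> complex) \<Rightarrow> real \<Rightarrow> ereal" where
  "entire_type \<phi> \<rho> = Limsup at_top
     (\<lambda>r::real. ereal (ln (max (max_modulus \<phi> r) 1) / r powr \<rho>))"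

end

theory Submission
  imports Defs
begin

text \<open>A Bloch function f with \<open>\<parallel>f\<parallel>\<^sub>\<B> \<le> K\<close> grows at most like \<open>K (1 + log (1/(1-|z|)))\<close>,
  while an entire function of order less than one, or of order one and type zero, satisfies
  \<open>|\<phi>(u)| \<le> B + exp(\<epsilon>|u|)\<close> for every \<open>\<epsilon> > 0\<close>. Taking \<open>\<epsilon> = \<delta>/K\<close> with \<open>\<delta> = (\<alpha>-\<beta>)/p\<close> gives
  \<open>|\<phi>(f(z))|\<^sup>p \<lesssim> 1 + (1-|z|)\<^bsup>\<beta>-\<alpha>\<^esup>\<close>, and this loss is exactly absorbed by passing from the weight
  \<open>(1-|z|\<^sup>2)\<^sup>\<alpha>\<close> to \<open>(1-|z|\<^sup>2)\<^sup>\<beta>\<close>, so the integral is bounded by a constant times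
  the \<open>A\<^sup>p\<^sub>\<beta>\<close> integral of w.\<close>

definition exponential_type_zero :: "(complex \<Rightarrow> complex) \<Rightarrow> bool" where
  "exponential_type_zero \<phi> \<longleftrightarrow>
     (\<forall>\<epsilon>>0. eventually (\<lambda>r. max_modulus \<phi> r \<le> exp (\<epsilon> * r)) at_top)"

lemma exponential_type_zero_if_entire_order_less_one:
  assumes "entire_order \<phi> < 1"
  shows "exponential_type_zero \<phi>"
  unfolding exponential_type_zero_def
proof (intro allI impI)
  fix \<epsilon> :: real assume "\<epsilon> > 0"
  obtain \<sigma> :: real where \<sigma>: "entire_order \<phi> < ereal \<sigma>" "ereal \<sigma> < 1"
    using ereal_dense2[OF assms] by blast
  have order_bound: "eventually (\<lambda>r. ln (ln (max (max_modulus \<phi> r) (exp 1))) / ln r < \<sigma>) at_top"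
    using Limsup_lessD[OF \<sigma>(1)[unfolded entire_order_def]] by simp
  have "((\<lambda>r::real. r powr (\<sigma> - 1)) \<longlongrightarrow> 0) at_top"
    using \<sigma>(2) by (intro tendsto_neg_powr filterlim_ident) auto
  then have small: "eventually (\<lambda>r::real. r powr (\<sigma> - 1) < \<epsilon>) at_top"
    using \<open>\<epsilon> > 0\<close> by (simp add: order_tendstoD(2))
  show "eventually (\<lambda>r. max_modulus \<phi> r \<le> exp (\<epsilon> * r)) at_top"
    using order_bound small eventually_gt_at_top[of 1]
  proof eventually_elim
    case (elim r)
    let ?m = "max (max_modulus \<phi> r) (exp 1)"
    have "exp 1 \<le> ?m" by simp
    then have "0 < ?m" by (rule less_le_trans[OF exp_gt_zero])
    with \<open>exp 1 \<le> ?m\<close> have "1 \<le> ln ?m" by (simp add: ln_ge_iff)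
    then have "ln ?m = exp (ln (ln ?m))" by simp
    also have "\<dots> < exp (\<sigma> * ln r)" using elim by (simp add: divide_less_eq)
    also have "\<dots> = r powr \<sigma>" using elim by (simp add: powr_def)
    also have "r powr \<sigma> = r * r powr (\<sigma> - 1)" using elim by (simp add: powr_diff)
    also have "\<dots> \<le> \<epsilon> * r" using elim by (simp add: mult.commute)
    finally have "exp (ln ?m) < exp (\<epsilon> * r)" by simp
    then show ?case using \<open>0 < ?m\<close> by simp
  qed
qed

lemma exponential_type_zero_if_entire_type_zero:
  assumes "entire_type \<phi> 1 = 0"
  shows "exponential_type_zero \<phi>"
  unfolding exponential_type_zero_def
proof (intro allI impI)
  fix \<epsilon> :: real assume "\<epsilon> > 0"
  then have "Limsup at_top (\<lambda>r. ereal (ln (max (max_modulus \<phi> r) 1) / r powr 1)) < ereal \<epsilon>"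
    using assms by (simp add: entire_type_def)
  then have "eventually (\<lambda>r. ereal (ln (max (max_modulus \<phi> r) 1) / r powr 1) < ereal \<epsilon>) at_top"
    by (rule Limsup_lessD)
  then show "eventually (\<lambda>r. max_modulus \<phi> r \<le> exp (\<epsilon> * r)) at_top"
    using eventually_gt_at_top[of 0]
  proof eventually_elim
    case (elim r)
    then have "ln (max (max_modulus \<phi> r) 1) < \<epsilon> * r"
      by (simp add: divide_less_eq mult.commute)
    then have "exp (ln (max (max_modulus \<phi> r) 1)) < exp (\<epsilon> * r)"
      by (simp only: exp_less_cancel_iff)
    then show ?case by simp
  qed
qed

lemma norm_le_max_modulus:
  assumes "continuous_on UNIV \<phi>"
  shows "cmod (\<phi> u) \<le> max_modulus \<phi> (cmod u)"
proof -
  have "compact ((\<lambda>z. cmod (\<phi> z)) ` sphere 0 (cmod u))"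
    using assms by (intro compact_continuous_image continuous_intros) (auto intro: continuous_on_subset)
  then have "bdd_above ((\<lambda>z. cmod (\<phi> z)) ` sphere 0 (cmod u))"
    by (simp add: bounded_imp_bdd_above compact_imp_bounded)
  then show ?thesis
    unfolding max_modulus_def by (intro cSUP_upper) auto
qed

lemma exponential_type_zero_bound:
  assumes cont: "continuous_on UNIV \<phi>" and "exponential_type_zero \<phi>" and "\<epsilon> > 0"
  obtains B where "0 \<le> B" and "\<And>u. cmod (\<phi> u) \<le> B + exp (\<epsilon> * cmod u)"
proof -
  obtain r0 where r0: "\<And>r. r \<ge> r0 \<Longrightarrow> max_modulus \<phi> r \<le> exp (\<epsilon> * r)"
    using assms by (auto simp: exponential_type_zero_def eventually_at_top_linorder)
  have "compact (\<phi> ` cball 0 r0)"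
    using cont by (intro compact_continuous_image) (auto intro: continuous_on_subset)
  then obtain B where B: "0 < B" "\<And>u. cmod u \<le> r0 \<Longrightarrow> cmod (\<phi> u) \<le> B"
    by (auto dest!: compact_imp_bounded simp: bounded_pos)
  have "cmod (\<phi> u) \<le> B + exp (\<epsilon> * cmod u)" for u
  proof (cases "cmod u \<le> r0")
    case True
    then show ?thesis using B(2)[OF True] by (smt (verit) exp_gt_zero)
  next
    case False
    then show ?thesis
      using norm_le_max_modulus[OF cont, of u] r0[of "cmod u"] B(1) by simp
  qed
  with B(1) show ?thesis by (intro that[of B]) auto
qed

lemma norm_deriv_le_bloch_bound:
  assumes "u \<in> unit_disc" and "(1 - (cmod u)\<^sup>2) * cmod (deriv f u) \<le> S"
  shows "cmod (deriv f u) \<le> S / (1 - cmod u)"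
proof -
  have "cmod u < 1" using assms(1) by simp
  then have "1 - cmod u \<le> 1 - (cmod u)\<^sup>2"
    by (simp add: power2_eq_square mult_left_le_one_le)
  then have "(1 - cmod u) * cmod (deriv f u) \<le> S"
    using assms(2) by (meson mult_right_mono norm_ge_zero order_trans)
  then show ?thesis using \<open>cmod u < 1\<close> by (simp add: field_simps)
qed

lemma norm_diff_le_bloch_seminorm_ln:
  fixes f :: "complex \<Rightarrow> complex"
  assumes hol: "f holomorphic_on unit_disc"
    and bnd: "\<And>u. u \<in> unit_disc \<Longrightarrow> (1 - (cmod u)\<^sup>2) * cmod (deriv f u) \<le> S"
    and z: "z \<in> unit_disc"
  shows "cmod (f z - f 0) \<le> S * - ln (1 - cmod z)"
proof -
  have z1: "cmod z < 1" using z by simp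
  have on_segment: "of_real t * z \<in> unit_disc" "0 < 1 - t * cmod z"
    if "0 \<le> t" "t \<le> 1" for t
  proof -
    have "cmod (of_real t * z) = t * cmod z" using that by (simp add: norm_mult)
    moreover have "t * cmod z \<le> cmod z" using that by (simp add: mult_left_le_one_le)
    ultimately show "of_real t * z \<in> unit_disc" "0 < 1 - t * cmod z"
      using z1 by simp_all
  qed
  define g where "g = (\<lambda>t::real. f (of_real t * z))"
  define h where "h = (\<lambda>t. - S * ln (1 - t * cmod z))"
  have "continuous_on {0..1} g"
    unfolding g_def
    by (rule continuous_on_compose2[OF holomorphic_on_imp_continuous_on[OF hol]])
      (use on_segment(1) in \<open>auto intro!: continuous_intros\<close>)
  moreover have "\<forall>t\<in>{0..1}. 0 < 1 - t * cmod z"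
    using on_segment(2) by simp
  then have "continuous_on {0..1} h"
    unfolding h_def by (auto intro!: continuous_intros)
  moreover have "(g has_vector_derivative (z * deriv f (of_real t * z))) (at t)"
    if "0 < t" "t < 1" for t
  proof -
    have "(f has_field_derivative deriv f (of_real t * z)) (at (of_real t * z))"
      using on_segment(1)[of t] that hol by (auto intro!: holomorphic_derivI[where S=unit_disc])
    moreover have "((\<lambda>t::real. of_real t * z) has_vector_derivative z) (at t)"
      by (auto intro!: derivative_eq_intros)
    ultimately show ?thesis
      unfolding g_def using field_vector_diff_chain_at[of "\<lambda>t::real. of_real t * z" z t f]
      by (simp add: o_def)
  qed
  moreover have "(h has_vector_derivative (S * cmod z / (1 - t * cmod z))) (at t)"
    if "0 < t" "t < 1" for t
    unfolding h_def has_real_derivative_iff_has_vector_derivative[symmetric]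
    using on_segment(2)[of t] that by (auto intro!: derivative_eq_intros simp: field_simps)
  moreover have "cmod (z * deriv f (of_real t * z)) \<le> S * cmod z / (1 - t * cmod z)"
    if "0 < t" "t < 1" for t
  proof -
    have "cmod (deriv f (of_real t * z)) \<le> S / (1 - t * cmod z)"
      using norm_deriv_le_bloch_bound[OF on_segment(1) bnd[OF on_segment(1)]] that
      by (simp add: norm_mult)
    then have "cmod z * cmod (deriv f (of_real t * z)) \<le> cmod z * (S / (1 - t * cmod z))"
      by (rule mult_left_mono) simp
    then show ?thesis by (simp add: norm_mult mult.commute)
  qed
  ultimately have "norm (g 1 - g 0) \<le> h 1 - h 0"
    by (intro differentiable_bound_general[OF zero_less_one]) auto
  then show ?thesis unfolding g_def h_def by simp
qed

lemma bloch_norm_nonneg: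
  assumes "f \<in> bloch_space"
  shows "0 \<le> bloch_norm f"
proof -
  have "bdd_above ((\<lambda>z. (1 - (cmod z)\<^sup>2) * cmod (deriv f z)) ` unit_disc)"
    using assms unfolding bloch_space_def by auto
  then have "0 \<le> (SUP z\<in>unit_disc. (1 - (cmod z)\<^sup>2) * cmod (deriv f z))"
    by (rule cSUP_upper2[where x=0]) auto
  then show ?thesis unfolding bloch_norm_def by simp
qed

lemma norm_le_bloch_norm_ln:
  assumes f: "f \<in> bloch_space" and "bloch_norm f \<le> K" and z: "z \<in> unit_disc"
  shows "cmod (f z) \<le> K * (1 - ln (1 - cmod z))"
proof -
  define S where "S = (SUP z\<in>unit_disc. (1 - (cmod z)\<^sup>2) * cmod (deriv f z))"
  have hol: "f holomorphic_on unit_disc"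
    and "bdd_above ((\<lambda>z. (1 - (cmod z)\<^sup>2) * cmod (deriv f z)) ` unit_disc)"
    using f unfolding bloch_space_def by auto
  then have bnd: "(1 - (cmod u)\<^sup>2) * cmod (deriv f u) \<le> S" if "u \<in> unit_disc" for u
    unfolding S_def using that by (intro cSUP_upper) auto
  have "0 \<le> S" using bnd[of 0] by (auto intro: order_trans[rotated])
  have "cmod (f 0) + S \<le> K"
    using assms(2) unfolding bloch_norm_def S_def[symmetric] .
  then have "S \<le> K" "cmod (f 0) \<le> K"
    using \<open>0 \<le> S\<close> norm_ge_zero[of "f 0"] by linarith+
  have "0 \<le> - ln (1 - cmod z)" using z by simp
  have "cmod (f z) \<le> cmod (f 0) + cmod (f z - f 0)"
    by (metis add.commute diff_add_cancel norm_triangle_ineq)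
  also have "\<dots> \<le> K + S * - ln (1 - cmod z)"
    using \<open>cmod (f 0) \<le> K\<close> norm_diff_le_bloch_seminorm_ln[OF hol bnd z] by simp
  also have "\<dots> \<le> K + K * - ln (1 - cmod z)"
    using mult_right_mono[OF \<open>S \<le> K\<close> \<open>0 \<le> - ln (1 - cmod z)\<close>] by simp
  finally show ?thesis by (simp add: algebra_simps)
qed

lemma norm_comp_bloch_le:
  assumes \<phi>: "\<And>u. cmod (\<phi> u) \<le> B + exp (\<delta> / K * cmod u)" and "0 \<le> \<delta>" and "0 < K"
    and f: "f \<in> bloch_space" "bloch_norm f \<le> K" and z: "z \<in> unit_disc"
  shows "cmod (\<phi> (f z)) \<le> B + exp \<delta> * (1 - cmod z) powr - \<delta>"
proof -
  have "\<delta> / K * cmod (f z) \<le> \<delta> / K * (K * (1 - ln (1 - cmod z)))"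
    using norm_le_bloch_norm_ln[OF f z] assms(2,3) by (intro mult_left_mono) auto
  then have "exp (\<delta> / K * cmod (f z)) \<le> exp (\<delta> / K * (K * (1 - ln (1 - cmod z))))"
    by simp
  also have "\<dots> = exp \<delta> * (1 - cmod z) powr - \<delta>"
    using \<open>0 < K\<close> z by (simp add: powr_def exp_add[symmetric] algebra_simps)
  finally show ?thesis using \<phi>[of "f z"] by simp
qed

lemma powr_add_le_two_powr:
  fixes a b p :: real
  assumes "0 \<le> a" and "0 \<le> b" and "0 \<le> p"
  shows "(a + b) powr p \<le> 2 powr p * (a powr p + b powr p)"
proof -
  have "(a + b) powr p \<le> (2 * max a b) powr p"
    using assms by (intro powr_mono2) auto
  also have "\<dots> = 2 powr p * max a b powr p"
    using assms by (simp add: powr_mult)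
  also have "max a b powr p \<le> a powr p + b powr p"
    by (simp add: max_def)
  finally show ?thesis by simp
qed

lemma disc_weight_ratio_le:
  fixes t \<alpha> \<beta> :: real
  assumes "0 \<le> t" and "t < 1" and "\<beta> \<le> \<alpha>"
  shows "(1 - t\<^sup>2) powr \<alpha> * (1 - t) powr (\<beta> - \<alpha>) \<le> 2 powr (\<alpha> - \<beta>) * (1 - t\<^sup>2) powr \<beta>"
proof -
  have factor: "1 - t\<^sup>2 = (1 - t) * (1 + t)" by (simp add: power2_eq_square algebra_simps)
  have "(1 - t\<^sup>2) powr \<alpha> = (1 - t\<^sup>2) powr \<beta> * ((1 - t) powr (\<alpha> - \<beta>) * (1 + t) powr (\<alpha> - \<beta>))"
    using assms by (simp add: factor powr_mult[symmetric] powr_add[symmetric])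
  then have "(1 - t\<^sup>2) powr \<alpha> * (1 - t) powr (\<beta> - \<alpha>) = (1 + t) powr (\<alpha> - \<beta>) * (1 - t\<^sup>2) powr \<beta>"
    using assms by (simp add: powr_add[symmetric])
  also have "\<dots> \<le> 2 powr (\<alpha> - \<beta>) * (1 - t\<^sup>2) powr \<beta>"
    using assms by (intro mult_right_mono powr_mono2) auto
  finally show ?thesis .
qed

lemma weighted_growth_le:
  fixes t p \<alpha> \<beta> B \<Phi> :: real
  assumes "0 \<le> t" and "t < 1" and "0 < p" and "\<beta> < \<alpha>" and "0 \<le> B" and "0 \<le> \<Phi>"
    and \<Phi>: "\<Phi> \<le> B + exp ((\<alpha> - \<beta>) / p) * (1 - t) powr - ((\<alpha> - \<beta>) / p)"
  shows "(1 - t\<^sup>2) powr \<alpha> * \<Phi> powr p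
     \<le> 2 powr p * (B powr p + exp (\<alpha> - \<beta>) * 2 powr (\<alpha> - \<beta>)) * (1 - t\<^sup>2) powr \<beta>"
proof -
  define E where "E = exp ((\<alpha> - \<beta>) / p) * (1 - t) powr - ((\<alpha> - \<beta>) / p)"
  have "0 \<le> E" unfolding E_def by simp
  have E_powr: "E powr p = exp (\<alpha> - \<beta>) * (1 - t) powr (\<beta> - \<alpha>)"
    using assms unfolding E_def by (simp add: powr_mult exp_powr_real powr_powr)
  have "\<Phi> powr p \<le> 2 powr p * (B powr p + E powr p)"
    using assms \<Phi> \<open>0 \<le> E\<close> unfolding E_def[symmetric]
    by (intro order_trans[OF powr_mono2 powr_add_le_two_powr]) auto
  then have "(1 - t\<^sup>2) powr \<alpha> * \<Phi> powr p \<le> (1 - t\<^sup>2) powr \<alpha> * (2 powr p * (B powr p + E powr p))"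
    by (rule mult_left_mono) simp
  also have "\<dots> = 2 powr p *
      (B powr p * (1 - t\<^sup>2) powr \<alpha> + exp (\<alpha> - \<beta>) * ((1 - t\<^sup>2) powr \<alpha> * (1 - t) powr (\<beta> - \<alpha>)))"
    unfolding E_powr by (simp add: algebra_simps)
  also have "\<dots> \<le> 2 powr p *
      (B powr p * (1 - t\<^sup>2) powr \<beta> + exp (\<alpha> - \<beta>) * (2 powr (\<alpha> - \<beta>) * (1 - t\<^sup>2) powr \<beta>))"
    using assms disc_weight_ratio_le[of t \<beta> \<alpha>]
    by (intro mult_left_mono add_mono powr_mono') (auto simp: power_le_one)
  finally show ?thesis by (simp add: algebra_simps)
qed

lemma bergman_integral_le_cmult:
  assumes w: "w holomorphic_on unit_disc" and "0 \<le> C"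
    and le: "\<And>z. z \<in> unit_disc \<Longrightarrow> (1 - (cmod z)\<^sup>2) powr \<alpha> * cmod (g z) powr p
               \<le> C * ((1 - (cmod z)\<^sup>2) powr \<beta> * cmod (w z) powr p)"
  shows "bergman_integral p \<alpha> g \<le> ennreal C * bergman_integral p \<beta> w"
proof -
  define W where "W = (\<lambda>z. indicator unit_disc z * ((1 - (cmod z)\<^sup>2) powr \<beta> * cmod (w z) powr p) / pi)"
  \<comment> \<open>w is only known on the disc; its extension by zero is Borel measurable on all of \<open>\<complex>\<close>.\<close>
  define w0 where "w0 = (\<lambda>z. indicator unit_disc z *\<^sub>R w z)"
  have [measurable]: "w0 \<in> borel_measurable borel"
    unfolding w0_def using holomorphic_on_imp_continuous_on[OF w]
    by (intro borel_measurable_continuous_on_indicator) auto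
  have [measurable]: "unit_disc \<in> sets borel" by simp
  have W_eq: "W = (\<lambda>z. indicator unit_disc z * ((1 - (cmod z)\<^sup>2) powr \<beta> * cmod (w0 z) powr p) / pi)"
    unfolding W_def w0_def by (auto simp: indicator_def fun_eq_iff)
  have W_meas: "(\<lambda>z. ennreal (W z)) \<in> borel_measurable lborel"
    unfolding W_eq measurable_lborel1 by measurable
  have "bergman_integral p \<alpha> g \<le> (\<integral>\<^sup>+ z. ennreal C * ennreal (W z) \<partial>lborel)"
    unfolding bergman_integral_def dA_integral_def W_def
    using le \<open>0 \<le> C\<close>
    by (intro nn_integral_mono) (auto simp: indicator_def ennreal_mult'[symmetric]
        intro!: ennreal_leI divide_right_mono)
  also have "\<dots> = ennreal C * bergman_integral p \<beta> w"
    using W_meas by (simp add: nn_integral_cmult bergman_integral_def dA_integral_def W_def)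
  finally show ?thesis .
qed

lemma bergman_integral_superpos_le:
  assumes "0 < p" and "\<beta> < \<alpha>" and w: "w holomorphic_on unit_disc"
    and "continuous_on UNIV \<phi>" and "exponential_type_zero \<phi>" and "0 < K"
  obtains C where "0 \<le> C" and "\<And>f. f \<in> bloch_space \<Longrightarrow> bloch_norm f \<le> K \<Longrightarrow>
    bergman_integral p \<alpha> (superpos \<phi> w f) \<le> ennreal C * bergman_integral p \<beta> w"
proof -
  define \<delta> where "\<delta> = (\<alpha> - \<beta>) / p"
  have "0 < \<delta>" unfolding \<delta>_def using assms by simp
  obtain B where "0 \<le> B" and \<phi>: "\<And>u. cmod (\<phi> u) \<le> B + exp (\<delta> / K * cmod u)"
    using exponential_type_zero_bound[OF assms(4,5), of "\<delta> / K"] \<open>0 < \<delta>\<close> \<open>0 < K\<close> by auto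
  define C where "C = 2 powr p * (B powr p + exp (\<alpha> - \<beta>) * 2 powr (\<alpha> - \<beta>))"
  have "bergman_integral p \<alpha> (superpos \<phi> w f) \<le> ennreal C * bergman_integral p \<beta> w"
    if f: "f \<in> bloch_space" "bloch_norm f \<le> K" for f
  proof (rule bergman_integral_le_cmult[OF w])
    fix z :: complex assume z: "z \<in> unit_disc"
    have "(1 - (cmod z)\<^sup>2) powr \<alpha> * cmod (\<phi> (f z)) powr p \<le> C * (1 - (cmod z)\<^sup>2) powr \<beta>"
      unfolding C_def using z assms(1,2) \<open>0 \<le> B\<close>
        norm_comp_bloch_le[OF \<phi> _ \<open>0 < K\<close> f z] \<open>0 < \<delta>\<close>
      by (intro weighted_growth_le) (auto simp: \<delta>_def)
    then have "(1 - (cmod z)\<^sup>2) powr \<alpha> * cmod (\<phi> (f z)) powr p * cmod (w z) powr p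
        \<le> C * (1 - (cmod z)\<^sup>2) powr \<beta> * cmod (w z) powr p"
      by (rule mult_right_mono) simp
    then show "(1 - (cmod z)\<^sup>2) powr \<alpha> * cmod (superpos \<phi> w f z) powr p
        \<le> C * ((1 - (cmod z)\<^sup>2) powr \<beta> * cmod (w z) powr p)"
      unfolding superpos_def by (simp add: norm_mult powr_mult mult_ac)
  qed (simp add: C_def)
  then show ?thesis using that[of C] by (simp add: C_def)
qed

lemma bergman_integral_superpos_bounded:
  assumes "0 < p" and "\<beta> < \<alpha>" and w: "w \<in> weighted_bergman p \<beta>"
    and "continuous_on UNIV \<phi>" and "exponential_type_zero \<phi>" and "0 < K"
  shows "\<exists>C::real. \<forall>f\<in>bloch_space. bloch_norm f \<le> K \<longrightarrow>
           bergman_integral p \<alpha> (superpos \<phi> w f) \<le> ennreal C"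
proof -
  have "w holomorphic_on unit_disc" and finite: "bergman_integral p \<beta> w < \<infinity>"
    using w by (auto simp: weighted_bergman_def)
  then obtain C where "0 \<le> C" and C: "\<And>f. f \<in> bloch_space \<Longrightarrow> bloch_norm f \<le> K \<Longrightarrow>
      bergman_integral p \<alpha> (superpos \<phi> w f) \<le> ennreal C * bergman_integral p \<beta> w"
    using bergman_integral_superpos_le[OF assms(1,2) _ assms(4-6)] by blast
  have real_bound: "ennreal C * bergman_integral p \<beta> w = ennreal (C * enn2real (bergman_integral p \<beta> w))"
    using finite \<open>0 \<le> C\<close> by (simp add: ennreal_mult ennreal_enn2real)
  show ?thesis
    using C unfolding real_bound by blast
qed

lemma superpos_holomorphic_on:
  assumes "\<phi> holomorphic_on UNIV" and "w holomorphic_on unit_disc" and "f holomorphic_on unit_disc"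
  shows "superpos \<phi> w f holomorphic_on unit_disc"
proof -
  have "(\<phi> \<circ> f) holomorphic_on unit_disc"
    using holomorphic_on_compose_gen[OF assms(3,1)] by simp
  then show ?thesis
    unfolding superpos_def using assms(2) by (simp add: o_def holomorphic_on_mult)
qed

theorem theorem2:
  fixes p \<alpha> \<beta> :: real and \<phi> w :: "complex \<Rightarrow> complex"
  assumes "0 < p" and "\<alpha> > -1"
    and "-1 < \<beta>" and "\<beta> < \<alpha>" and "w \<in> weighted_bergman p \<beta>"
    and "\<phi> holomorphic_on UNIV"
    and "entire_order \<phi> < 1 \<or> (entire_order \<phi> = 1 \<and> entire_type \<phi> 1 = 0)"
  shows "(\<forall>f\<in>bloch_space. superpos \<phi> w f \<in> weighted_bergman p \<alpha>) \<and>
         (\<forall>K>0. \<exists>C::real. \<forall>f\<in>bloch_space. bloch_norm f \<le> K \<longrightarrow>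
             bergman_integral p \<alpha> (superpos \<phi> w f) \<le> ennreal C)"
proof -
  \<comment> \<open>The hypotheses \<open>\<alpha>, \<beta> > -1\<close> only make the spaces nontrivial; the estimate does not use them.\<close>
  have "exponential_type_zero \<phi>"
    using assms(7) exponential_type_zero_if_entire_order_less_one
      exponential_type_zero_if_entire_type_zero by blast
  note bounded = bergman_integral_superpos_bounded[OF assms(1,4,5)
      holomorphic_on_imp_continuous_on[OF assms(6)] this]
  have "superpos \<phi> w f \<in> weighted_bergman p \<alpha>" if f: "f \<in> bloch_space" for f
  proof -
    have "0 < bloch_norm f + 1" using bloch_norm_nonneg[OF f] by simp
    then obtain C :: real where "\<forall>g\<in>bloch_space. bloch_norm g \<le> bloch_norm f + 1 \<longrightarrow>
        bergman_integral p \<alpha> (superpos \<phi> w g) \<le> ennreal C"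
      by (rule bounded[THEN exE])
    then have "bergman_integral p \<alpha> (superpos \<phi> w f) \<le> ennreal C" using f by simp
    also have "\<dots> < \<infinity>" by simp
    finally show ?thesis
      using superpos_holomorphic_on[OF assms(6)] assms(5) f
      by (simp add: weighted_bergman_def bloch_space_def)
  qed
  with bounded show ?thesis by blast
qed

end
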